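(* Let $(\mathbf X_1,\mathbf Y_1)$, $(\mathbf X_2,\mathbf Y_2)$ be general correlated sources and $(\mathbf X,\mathbf Y)$ the mixture $P_{X^nY^n}=\alpha_1P_{X_1^nY_1^n}+\alpha_2P_{X_2^nY_2^n}$ with $\alpha_1,\alpha_2>0$, $\alpha_1+\alpha_2=1$. If for both $i=1,2$ the sequence $\{\frac1n\log\frac1{P_{X_i^n|Y_i^n}(X_i^n|Y_i^n)}\}_{n\ge1}$ satisfies Condition (W), then $\{\frac1n\log\frac1{P_{X^n|Y^n}(X^n|Y^n)}\}_{n\ge1}$ also satisfies Condition (W).
   Context: A general correlated source $\{(X^n,Y^n)\}_{n\ge1}$ is an arbitrary sequence of pairs of random variables on $\mathcal X^n\times\mathcal Y^n$, $\mathcal X,\mathcal Y$ finite or countably infinite (no structural assumptions; marginal probabilities positive). Logs base 2. A sequence $\{Z_n\}$ of discrete real random variables ($Z_n$ taking values in a countable set $\mathcal Z_n$) satisfies Condition (W) if: (i) there is $M<\infty$ with $\mathbb E[Z_n]<M$ for all $n$; and (ii) whenever subsets $\mathcal A_n\subseteq\mathcal Z_n$ satisfy $P_{Z_n}(\mathcal A_n)\to0$, then $\lim_n\sum_{z\in\mathcal A_n}P_{Z_n}(z)|z|=0$. *)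

theory Defs
  imports "HOL-Probability.Probability"
begin

definition correlated_source :: "(nat \<Rightarrow> ('x list \<times> 'y list) pmf) \<Rightarrow> bool" where
  "correlated_source P \<longleftrightarrow>
     (\<forall>n. set_pmf (P n) \<subseteq> {(x, y). length x = n \<and> length y = n})"

definition cond_prob :: "('a \<times> 'b) pmf \<Rightarrow> 'a \<Rightarrow> 'b \<Rightarrow> real" where
  "cond_prob P x y = pmf P (x, y) / pmf (map_pmf snd P) y"

definition cond_info_density :: "nat \<Rightarrow> ('a \<times> 'b) pmf \<Rightarrow> real pmf" where
  "cond_info_density n P =
     map_pmf (\<lambda>(x, y). (1 / real n) * log 2 (1 / cond_prob P x y)) P"

text \<open>Condition (W) for a sequence of discrete real random variables, given by their
  distributions Q n (n \<ge> 1); the countable value set Z_n is the support of Q n.\<close>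
definition condition_W :: "(nat \<Rightarrow> real pmf) \<Rightarrow> bool" where
  "condition_W Q \<longleftrightarrow>
     (\<exists>M. \<forall>n\<ge>1. integrable (measure_pmf (Q n)) (\<lambda>z. z) \<and>
                 measure_pmf.expectation (Q n) (\<lambda>z. z) < M) \<and>
     (\<forall>A :: nat \<Rightarrow> real set.
        (\<forall>n. A n \<subseteq> set_pmf (Q n)) \<longrightarrow>
        (\<lambda>n. measure_pmf.prob (Q n) (A n)) \<longlonglongrightarrow> 0 \<longrightarrow>
        (\<lambda>n. \<integral>\<^sup>+ z \<in> A n. ennreal \<bar>z\<bar> \<partial>measure_pmf (Q n)) \<longlonglongrightarrow> 0)"

end

theory Submission
  imports Defs
begin

text \<open>For nonnegative variables, Condition (W) is equivalent to a uniform integrability property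
  on the underlying space: the first moments are bounded, and integrals over events E n vanish
  whenever the probabilities of E n do. Unlike Condition (W), this property passes directly to
  mixtures, because an event that is rare under the mixture is rare under each component. It
  therefore suffices to show that the conditional self-information of the mixture has the property
  under each component. On the support of the first component it is at most log (1/\<alpha>1), plus
  the conditional self-information of that component, plus (1/n) log R, where R is the ratio of
  the Y-marginals of the mixture and of the component. Since R has expectation at most 1 under the
  component, the last term is dominated by 4 sqrt R, whose integral over an event of
  probability p is at most 8 sqrt p by AM-GM.\<close>

definition asymp_unif_integrable :: "(nat \<Rightarrow> 'a pmf) \<Rightarrow> (nat \<Rightarrow> 'a \<Rightarrow> real) \<Rightarrow> bool" where
  "asymp_unif_integrable P f \<longleftrightarrow>
     (\<exists>M<\<infinity>. \<forall>n\<ge>1. (\<integral>\<^sup>+w. ennreal \<bar>f n w\<bar> \<partial>P n) \<le> M) \<and>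
     (\<forall>E. (\<lambda>n. measure (P n) (E n)) \<longlonglongrightarrow> 0 \<longrightarrow>
          (\<lambda>n. \<integral>\<^sup>+w\<in>E n. ennreal \<bar>f n w\<bar> \<partial>P n) \<longlonglongrightarrow> 0)"

lemma asymp_unif_integrable_bounded:
  "asymp_unif_integrable P f \<Longrightarrow> \<exists>M<\<infinity>. \<forall>n\<ge>1. (\<integral>\<^sup>+w. ennreal \<bar>f n w\<bar> \<partial>P n) \<le> M"
  unfolding asymp_unif_integrable_def by blast

lemma asymp_unif_integrable_tendsto_0:
  "asymp_unif_integrable P f \<Longrightarrow> (\<lambda>n. measure (P n) (E n)) \<longlonglongrightarrow> 0 \<Longrightarrow>
    (\<lambda>n. \<integral>\<^sup>+w\<in>E n. ennreal \<bar>f n w\<bar> \<partial>P n) \<longlonglongrightarrow> 0"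
  unfolding asymp_unif_integrable_def by blast

lemma nn_integral_pmf_mixture:
  fixes P P1 P2 :: "'a pmf"
  assumes "\<And>z. pmf P z = a1 * pmf P1 z + a2 * pmf P2 z" "0 \<le> a1" "0 \<le> a2"
  shows "(\<integral>\<^sup>+x. f x \<partial>P) = ennreal a1 * (\<integral>\<^sup>+x. f x \<partial>P1) + ennreal a2 * (\<integral>\<^sup>+x. f x \<partial>P2)"
proof -
  have "(\<integral>\<^sup>+x. f x \<partial>P) = (\<integral>\<^sup>+x. ennreal a1 * (ennreal (pmf P1 x) * f x) + ennreal a2 * (ennreal (pmf P2 x) * f x) \<partial>count_space UNIV)"
    unfolding nn_integral_measure_pmf
    by (intro nn_integral_cong) (simp add: assms ennreal_plus ennreal_mult distrib_right mult.assoc)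
  also have "\<dots> = ennreal a1 * (\<integral>\<^sup>+x. f x \<partial>P1) + ennreal a2 * (\<integral>\<^sup>+x. f x \<partial>P2)"
    unfolding nn_integral_measure_pmf by (simp add: nn_integral_add nn_integral_cmult)
  finally show ?thesis .
qed

lemma measure_pmf_mixture:
  fixes P P1 P2 :: "'a pmf"
  assumes "\<And>z. pmf P z = a1 * pmf P1 z + a2 * pmf P2 z" "0 \<le> a1" "0 \<le> a2"
  shows "measure P S = a1 * measure P1 S + a2 * measure P2 S"
proof -
  have "ennreal (measure P S) = ennreal (a1 * measure P1 S + a2 * measure P2 S)"
    using nn_integral_pmf_mixture[OF assms, of "indicator S"] assms(2,3)
    by (simp add: measure_pmf.emeasure_eq_measure[symmetric] ennreal_plus ennreal_mult)
  then show ?thesis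
    using assms(2,3) by (subst (asm) ennreal_inj) auto
qed

lemma measure_pmf_mixture_component_tendsto_0:
  assumes mix: "\<And>n z. pmf (P n) z = a1 * pmf (P1 n) z + a2 * pmf (P2 n) z"
    and "0 < a1" "0 \<le> a2"
    and "(\<lambda>n. measure (P n) (E n)) \<longlonglongrightarrow> 0"
  shows "(\<lambda>n. measure (P1 n) (E n)) \<longlonglongrightarrow> 0"
proof (rule tendsto_sandwich[of "\<lambda>_. 0" _ _ "\<lambda>n. measure (P n) (E n) / a1"])
  show "\<forall>\<^sub>F n in sequentially. measure (P1 n) (E n) \<le> measure (P n) (E n) / a1"
  proof (intro always_eventually allI)
    fix n
    have "a1 * measure (P1 n) (E n) \<le> measure (P n) (E n)"
      using measure_pmf_mixture[OF mix, of n "E n"] \<open>0 < a1\<close> \<open>0 \<le> a2\<close> by simp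
    then show "measure (P1 n) (E n) \<le> measure (P n) (E n) / a1"
      using \<open>0 < a1\<close> by (simp add: le_divide_eq mult.commute)
  qed
  show "(\<lambda>n. measure (P n) (E n) / a1) \<longlonglongrightarrow> 0"
    using assms(4) by (rule tendsto_divide_zero)
qed auto

lemma asymp_unif_integrable_mixture:
  assumes mix: "\<And>n z. pmf (P n) z = a1 * pmf (P1 n) z + a2 * pmf (P2 n) z"
    and a1: "0 < a1" and a2: "0 < a2"
    and ui1: "asymp_unif_integrable P1 f" and ui2: "asymp_unif_integrable P2 f"
  shows "asymp_unif_integrable P f"
  unfolding asymp_unif_integrable_def
proof (intro conjI allI impI)
  obtain M1 M2 where M: "M1 < \<infinity>" "M2 < \<infinity>"
    and M1: "\<And>n. n \<ge> 1 \<Longrightarrow> (\<integral>\<^sup>+w. ennreal \<bar>f n w\<bar> \<partial>P1 n) \<le> M1"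
    and M2: "\<And>n. n \<ge> 1 \<Longrightarrow> (\<integral>\<^sup>+w. ennreal \<bar>f n w\<bar> \<partial>P2 n) \<le> M2"
    using asymp_unif_integrable_bounded[OF ui1] asymp_unif_integrable_bounded[OF ui2] by blast
  have "(\<integral>\<^sup>+w. ennreal \<bar>f n w\<bar> \<partial>P n) \<le> ennreal a1 * M1 + ennreal a2 * M2" if "n \<ge> 1" for n
    unfolding nn_integral_pmf_mixture[OF mix less_imp_le[OF a1] less_imp_le[OF a2]]
    using M1 M2 that by (intro add_mono mult_left_mono) auto
  moreover have "ennreal a1 * M1 + ennreal a2 * M2 < \<infinity>"
    using M by (simp add: ennreal_mult_less_top)
  ultimately show "\<exists>M<\<infinity>. \<forall>n\<ge>1. (\<integral>\<^sup>+w. ennreal \<bar>f n w\<bar> \<partial>P n) \<le> M"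
    by blast
next
  fix E assume E: "(\<lambda>n. measure (P n) (E n)) \<longlonglongrightarrow> 0"
  have mix': "\<And>n z. pmf (P n) z = a2 * pmf (P2 n) z + a1 * pmf (P1 n) z"
    using mix by simp
  have "(\<lambda>n. \<integral>\<^sup>+w\<in>E n. ennreal \<bar>f n w\<bar> \<partial>P1 n) \<longlonglongrightarrow> 0"
    using measure_pmf_mixture_component_tendsto_0[OF mix a1 less_imp_le[OF a2] E]
    by (rule asymp_unif_integrable_tendsto_0[OF ui1])
  moreover have "(\<lambda>n. \<integral>\<^sup>+w\<in>E n. ennreal \<bar>f n w\<bar> \<partial>P2 n) \<longlonglongrightarrow> 0"
    using measure_pmf_mixture_component_tendsto_0[OF mix' a2 less_imp_le[OF a1] E]
    by (rule asymp_unif_integrable_tendsto_0[OF ui2])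
  ultimately have "(\<lambda>n. ennreal a1 * (\<integral>\<^sup>+w\<in>E n. ennreal \<bar>f n w\<bar> \<partial>P1 n)
      + ennreal a2 * (\<integral>\<^sup>+w\<in>E n. ennreal \<bar>f n w\<bar> \<partial>P2 n)) \<longlonglongrightarrow> ennreal a1 * 0 + ennreal a2 * 0"
    by (intro tendsto_add ennreal_tendsto_cmult) auto
  then show "(\<lambda>n. \<integral>\<^sup>+w\<in>E n. ennreal \<bar>f n w\<bar> \<partial>P n) \<longlonglongrightarrow> 0"
    by (simp add: nn_integral_pmf_mixture[OF mix less_imp_le[OF a1] less_imp_le[OF a2]])
qed

lemma condition_W_nn_integral_bounded:
  assumes W: "condition_W Q" and nonneg: "\<And>n z. z \<in> set_pmf (Q n) \<Longrightarrow> 0 \<le> z"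
  shows "\<exists>M\<ge>0. \<forall>n\<ge>1. (\<integral>\<^sup>+z. ennreal \<bar>z\<bar> \<partial>Q n) \<le> ennreal M"
proof -
  obtain M where M: "\<And>n. n \<ge> 1 \<Longrightarrow> integrable (Q n) (\<lambda>z. z) \<and> measure_pmf.expectation (Q n) (\<lambda>z. z) < M"
    using W unfolding condition_W_def by blast
  have "(\<integral>\<^sup>+z. ennreal \<bar>z\<bar> \<partial>Q n) \<le> ennreal (max M 0)" if "n \<ge> 1" for n
  proof -
    have "(\<integral>\<^sup>+z. ennreal \<bar>z\<bar> \<partial>Q n) = ennreal (measure_pmf.expectation (Q n) (\<lambda>z. z))"
      using M[OF that] nonneg
      by (subst nn_integral_eq_integral[symmetric]) (auto intro!: nn_integral_cong_AE AE_pmfI)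
    also have "\<dots> \<le> ennreal (max M 0)"
      using M[OF that] by (intro ennreal_leI max.coboundedI1 less_imp_le) simp
    finally show ?thesis .
  qed
  then show ?thesis by (intro exI[of _ "max M 0"]) auto
qed

lemma condition_W_tail_tendsto_0:
  assumes W: "condition_W Q" and nonneg: "\<And>n z. z \<in> set_pmf (Q n) \<Longrightarrow> 0 \<le> z"
    and K: "filterlim K at_top sequentially"
  shows "(\<lambda>n. \<integral>\<^sup>+z\<in>{z. K n < z}. ennreal \<bar>z\<bar> \<partial>Q n) \<longlonglongrightarrow> 0"
proof -
  have "\<exists>M\<ge>0. \<forall>n\<ge>1. (\<integral>\<^sup>+z. ennreal \<bar>z\<bar> \<partial>Q n) \<le> ennreal M"
    using W nonneg by (rule condition_W_nn_integral_bounded)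
  then obtain M where "M \<ge> 0" and M: "\<forall>n\<ge>1. (\<integral>\<^sup>+z. ennreal \<bar>z\<bar> \<partial>Q n) \<le> ennreal M"
    by blast
  define A where "A n = {z \<in> set_pmf (Q n). K n < z}" for n
  have Markov: "measure (Q n) (A n) \<le> M / K n" if "n \<ge> 1" "0 < K n" for n
  proof -
    have "ennreal (K n * measure (Q n) (A n)) = ennreal (K n) * emeasure (Q n) (A n)"
      unfolding measure_pmf.emeasure_eq_measure using that by (intro ennreal_mult) auto
    also have "\<dots> = (\<integral>\<^sup>+z. ennreal (K n) * indicator (A n) z \<partial>Q n)"
      by (simp add: nn_integral_cmult_indicator)
    also have "\<dots> \<le> (\<integral>\<^sup>+z. ennreal \<bar>z\<bar> \<partial>Q n)"
      by (intro nn_integral_mono) (auto simp: A_def split: split_indicator intro!: ennreal_leI)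
    also have "\<dots> \<le> ennreal M"
      using M that(1) by blast
    finally show ?thesis
      using that \<open>M \<ge> 0\<close> by (simp add: ennreal_le_iff le_divide_eq mult.commute)
  qed
  have "(\<lambda>n. measure (Q n) (A n)) \<longlonglongrightarrow> 0"
  proof (rule tendsto_sandwich[of "\<lambda>_. 0" _ _ "\<lambda>n. M / K n"])
    show "\<forall>\<^sub>F n in sequentially. measure (Q n) (A n) \<le> M / K n"
      using eventually_ge_at_top[of 1] filterlim_at_top_dense[THEN iffD1, OF K, rule_format, of 0]
      by eventually_elim (rule Markov)
    show "(\<lambda>n. M / K n) \<longlonglongrightarrow> 0"
      using K by (intro tendsto_divide_0[OF tendsto_const] filterlim_at_top_imp_at_infinity)
  qed simp_all
  moreover have "\<forall>n. A n \<subseteq> set_pmf (Q n)"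
    unfolding A_def by auto
  ultimately have "(\<lambda>n. \<integral>\<^sup>+z\<in>A n. ennreal \<bar>z\<bar> \<partial>Q n) \<longlonglongrightarrow> 0"
    using W unfolding condition_W_def by blast
  moreover have "(\<integral>\<^sup>+z\<in>A n. ennreal \<bar>z\<bar> \<partial>Q n) = (\<integral>\<^sup>+z\<in>{z. K n < z}. ennreal \<bar>z\<bar> \<partial>Q n)" for n
    unfolding A_def by (intro nn_integral_cong_AE AE_pmfI) (auto split: split_indicator)
  ultimately show ?thesis by simp
qed

lemma asymp_unif_integrable_if_condition_W:
  assumes W: "condition_W (\<lambda>n. map_pmf (Z n) (P n))"
    and nonneg: "\<And>n w. w \<in> set_pmf (P n) \<Longrightarrow> 0 \<le> Z n w"
  shows "asymp_unif_integrable P Z"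
proof -
  have nonneg': "\<And>n z. z \<in> set_pmf (map_pmf (Z n) (P n)) \<Longrightarrow> 0 \<le> z"
    using nonneg by auto
  show ?thesis
    unfolding asymp_unif_integrable_def
  proof (intro conjI allI impI)
    have "\<exists>M\<ge>0. \<forall>n\<ge>1. (\<integral>\<^sup>+z. ennreal \<bar>z\<bar> \<partial>map_pmf (Z n) (P n)) \<le> ennreal M"
      using W nonneg' by (rule condition_W_nn_integral_bounded)
    then obtain M where "\<forall>n\<ge>1. (\<integral>\<^sup>+w. ennreal \<bar>Z n w\<bar> \<partial>P n) \<le> ennreal M"
      by auto
    then show "\<exists>M<\<infinity>. \<forall>n\<ge>1. (\<integral>\<^sup>+w. ennreal \<bar>Z n w\<bar> \<partial>P n) \<le> M"
      by (intro exI[of _ "ennreal M"]) auto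
  next
    fix E assume E: "(\<lambda>n. measure (P n) (E n)) \<longlonglongrightarrow> 0"
    \<comment> \<open>Truncate at a level K n that grows to infinity, but slowly enough that K n times the
      probability of E n still vanishes.\<close>
    define q where "q n = measure (P n) (E n) + inverse (real (Suc n))" for n
    define K where "K n = inverse (sqrt (q n))" for n
    have q_pos: "0 < q n" for n
      unfolding q_def by (simp add: add_nonneg_pos)
    have "q \<longlonglongrightarrow> 0"
      unfolding q_def using tendsto_add[OF E LIMSEQ_inverse_real_of_nat] by simp
    then have sqrt_q: "(\<lambda>n. sqrt (q n)) \<longlonglongrightarrow> 0"
      using tendsto_real_sqrt by fastforce
    then have "filterlim K at_top sequentially"
      unfolding K_def using q_pos by (intro filterlim_inverse_at_top) auto
    with W nonneg' have "(\<lambda>n. \<integral>\<^sup>+z\<in>{z. K n < z}. ennreal \<bar>z\<bar> \<partial>map_pmf (Z n) (P n)) \<longlonglongrightarrow> 0"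
      by (rule condition_W_tail_tendsto_0)
    then have tail: "(\<lambda>n. \<integral>\<^sup>+w. ennreal \<bar>Z n w\<bar> * indicator {z. K n < z} (Z n w) \<partial>P n) \<longlonglongrightarrow> 0"
      by simp
    have bound: "(\<integral>\<^sup>+w\<in>E n. ennreal \<bar>Z n w\<bar> \<partial>P n)
        \<le> ennreal (sqrt (q n)) + (\<integral>\<^sup>+w. ennreal \<bar>Z n w\<bar> * indicator {z. K n < z} (Z n w) \<partial>P n)" for n
    proof -
      have "(\<integral>\<^sup>+w\<in>E n. ennreal \<bar>Z n w\<bar> \<partial>P n)
          \<le> (\<integral>\<^sup>+w. ennreal (K n) * indicator (E n) w + ennreal \<bar>Z n w\<bar> * indicator {z. K n < z} (Z n w) \<partial>P n)"
      proof (intro nn_integral_mono_AE AE_pmfI)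
        fix w assume "w \<in> set_pmf (P n)"
        then have "\<bar>Z n w\<bar> \<le> K n" if "\<not> K n < Z n w"
          using nonneg that by fastforce
        then show "ennreal \<bar>Z n w\<bar> * indicator (E n) w
            \<le> ennreal (K n) * indicator (E n) w + ennreal \<bar>Z n w\<bar> * indicator {z. K n < z} (Z n w)"
        proof (cases "w \<in> E n"; cases "K n < Z n w")
          assume "w \<in> E n" "K n < Z n w"
          then show ?thesis by (simp add: add_increasing)
        qed (auto intro: ennreal_leI)
      qed
      also have "\<dots> = ennreal (K n * measure (P n) (E n)) + (\<integral>\<^sup>+w. ennreal \<bar>Z n w\<bar> * indicator {z. K n < z} (Z n w) \<partial>P n)"
        using q_pos[of n]
        by (simp add: nn_integral_add nn_integral_cmult_indicator K_def measure_pmf.emeasure_eq_measure ennreal_mult)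
      also have "K n * measure (P n) (E n) \<le> sqrt (q n)"
      proof -
        have "K n * measure (P n) (E n) \<le> K n * q n"
          using q_pos[of n] unfolding K_def q_def by (intro mult_left_mono) auto
        also have "\<dots> = sqrt (q n)"
          using q_pos[of n] unfolding K_def by (simp add: real_div_sqrt divide_inverse_commute[symmetric])
        finally show ?thesis .
      qed
      finally show ?thesis by (simp add: add_right_mono ennreal_leI)
    qed
    have "(\<lambda>n. ennreal (sqrt (q n)) + (\<integral>\<^sup>+w. ennreal \<bar>Z n w\<bar> * indicator {z. K n < z} (Z n w) \<partial>P n)) \<longlonglongrightarrow> ennreal 0 + 0"
      using sqrt_q tail by (intro tendsto_add tendsto_ennrealI)
    then have upper: "(\<lambda>n. ennreal (sqrt (q n)) + (\<integral>\<^sup>+w. ennreal \<bar>Z n w\<bar> * indicator {z. K n < z} (Z n w) \<partial>P n)) \<longlonglongrightarrow> 0"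
      by simp
    show "(\<lambda>n. \<integral>\<^sup>+w\<in>E n. ennreal \<bar>Z n w\<bar> \<partial>P n) \<longlonglongrightarrow> 0"
      by (rule tendsto_sandwich[OF _ _ tendsto_const upper]) (simp_all add: bound)
  qed
qed

lemma condition_W_map_pmfI:
  assumes "asymp_unif_integrable P Z"
  shows "condition_W (\<lambda>n. map_pmf (Z n) (P n))"
  unfolding condition_W_def
proof (intro conjI allI impI)
  obtain M where "M < \<infinity>" and M: "\<And>n. n \<ge> 1 \<Longrightarrow> (\<integral>\<^sup>+w. ennreal \<bar>Z n w\<bar> \<partial>P n) \<le> M"
    using asymp_unif_integrable_bounded[OF assms] by blast
  have "integrable (P n) (Z n) \<and> measure_pmf.expectation (P n) (Z n) < enn2real M + 1" if "n \<ge> 1" for n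
  proof
    have finite: "(\<integral>\<^sup>+w. ennreal \<bar>Z n w\<bar> \<partial>P n) < \<infinity>"
      using M[OF that] \<open>M < \<infinity>\<close> by (rule le_less_trans)
    then show int: "integrable (P n) (Z n)"
      by (intro integrableI_bounded) auto
    have "measure_pmf.expectation (P n) (Z n) \<le> measure_pmf.expectation (P n) (\<lambda>w. \<bar>Z n w\<bar>)"
      using int by (intro integral_mono) auto
    also have "\<dots> = enn2real (\<integral>\<^sup>+w. ennreal \<bar>Z n w\<bar> \<partial>P n)"
      using int by (simp add: integral_eq_nn_integral)
    also have "\<dots> \<le> enn2real M"
      using M[OF that] \<open>M < \<infinity>\<close> by (intro enn2real_mono) auto
    finally show "measure_pmf.expectation (P n) (Z n) < enn2real M + 1" by simp
  qed
  then show "\<exists>M. \<forall>n\<ge>1. integrable (map_pmf (Z n) (P n)) (\<lambda>z. z)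
      \<and> measure_pmf.expectation (map_pmf (Z n) (P n)) (\<lambda>z. z) < M"
    by auto
next
  fix A assume "(\<lambda>n. measure_pmf.prob (map_pmf (Z n) (P n)) (A n)) \<longlonglongrightarrow> 0"
  then have "(\<lambda>n. measure (P n) (Z n -` A n)) \<longlonglongrightarrow> 0" by simp
  then have "(\<lambda>n. \<integral>\<^sup>+w\<in>Z n -` A n. ennreal \<bar>Z n w\<bar> \<partial>P n) \<longlonglongrightarrow> 0"
    by (rule asymp_unif_integrable_tendsto_0[OF assms])
  then show "(\<lambda>n. \<integral>\<^sup>+z\<in>A n. ennreal \<bar>z\<bar> \<partial>map_pmf (Z n) (P n)) \<longlonglongrightarrow> 0"
    by (simp add: indicator_vimage[symmetric])
qed

lemma sqrt_le_add_divide: "0 < K \<Longrightarrow> 0 \<le> R \<Longrightarrow> sqrt R \<le> K + R / K"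
proof (cases "sqrt R \<le> K")
  case False
  assume "0 < K" "0 \<le> R"
  then have "sqrt R * K \<le> sqrt R * sqrt R"
    using False by (intro mult_left_mono) auto
  then have "sqrt R \<le> R / K"
    using \<open>0 < K\<close> \<open>0 \<le> R\<close> by (simp add: le_divide_eq)
  then show ?thesis
    using \<open>0 < K\<close> by linarith
qed (simp add: add_increasing2)

lemma set_nn_integral_sqrt_le:
  fixes P :: "'a pmf"
  assumes R_nonneg: "\<And>w. 0 \<le> R w" and R_int: "(\<integral>\<^sup>+w. ennreal (R w) \<partial>P) \<le> 1"
  shows "(\<integral>\<^sup>+w\<in>S. ennreal (sqrt (R w)) \<partial>P) \<le> ennreal (2 * sqrt (measure P S))"
proof (cases "measure P S = 0")
  case True
  then have "(\<integral>\<^sup>+w\<in>S. ennreal (sqrt (R w)) \<partial>P) = 0"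
    by (intro nn_integral_zero' AE_pmfI) (auto simp: measure_pmf_zero_iff disjnt_iff split: split_indicator)
  then show ?thesis by simp
next
  case False
  \<comment> \<open>AM-GM with the weight K chosen to balance the two resulting terms.\<close>
  define K where "K = inverse (sqrt (measure P S))"
  have K_pos: "0 < K"
    unfolding K_def using False by (simp add: measure_nonneg order_le_neq_trans)
  have "(\<integral>\<^sup>+w\<in>S. ennreal (sqrt (R w)) \<partial>P)
      \<le> (\<integral>\<^sup>+w. ennreal K * indicator S w + ennreal (inverse K) * ennreal (R w) \<partial>P)"
  proof (intro nn_integral_mono)
    fix w
    have "sqrt (R w) \<le> K + R w / K"
      using K_pos R_nonneg by (rule sqrt_le_add_divide)
    then have "ennreal (sqrt (R w)) \<le> ennreal (K + inverse K * R w)"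
      by (intro ennreal_leI) (simp add: divide_inverse_commute)
    also have "\<dots> = ennreal K + ennreal (inverse K) * ennreal (R w)"
      using K_pos R_nonneg[of w] by (simp add: ennreal_plus ennreal_mult)
    finally have "ennreal (sqrt (R w)) \<le> ennreal K + ennreal (inverse K) * ennreal (R w)" .
    then show "ennreal (sqrt (R w)) * indicator S w \<le> ennreal K * indicator S w + ennreal (inverse K) * ennreal (R w)"
      by (cases "w \<in> S") auto
  qed
  also have "\<dots> = ennreal K * emeasure P S + ennreal (inverse K) * (\<integral>\<^sup>+w. ennreal (R w) \<partial>P)"
    by (simp add: nn_integral_add nn_integral_cmult nn_integral_cmult_indicator)
  also have "\<dots> \<le> ennreal K * ennreal (measure P S) + ennreal (inverse K) * 1"
    using R_int by (intro add_mono mult_left_mono) (auto simp: measure_pmf.emeasure_eq_measure)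
  also have "\<dots> = ennreal (K * measure P S + inverse K)"
    using K_pos by (simp add: ennreal_plus ennreal_mult)
  also have "K * measure P S + inverse K = 2 * sqrt (measure P S)"
    unfolding K_def using False
    by (simp add: measure_nonneg real_div_sqrt divide_inverse_commute[symmetric])
  finally show ?thesis .
qed

lemma set_nn_integral_dominated_le:
  fixes P :: "'a pmf"
  assumes F_le: "\<And>w. w \<in> set_pmf P \<Longrightarrow> \<bar>F w\<bar> \<le> c + \<bar>Z w\<bar> + b * sqrt (R w)"
    and c: "0 \<le> c" and b: "0 \<le> b"
    and R_nonneg: "\<And>w. 0 \<le> R w" and R_int: "(\<integral>\<^sup>+w. ennreal (R w) \<partial>P) \<le> 1"
  shows "(\<integral>\<^sup>+w\<in>S. ennreal \<bar>F w\<bar> \<partial>P)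
    \<le> ennreal (c * measure P S + 2 * b * sqrt (measure P S)) + (\<integral>\<^sup>+w\<in>S. ennreal \<bar>Z w\<bar> \<partial>P)"
proof -
  have "(\<integral>\<^sup>+w\<in>S. ennreal \<bar>F w\<bar> \<partial>P)
      \<le> (\<integral>\<^sup>+w. ennreal c * indicator S w + ennreal b * (ennreal (sqrt (R w)) * indicator S w)
            + ennreal \<bar>Z w\<bar> * indicator S w \<partial>P)"
  proof (intro nn_integral_mono_AE AE_pmfI)
    fix w assume "w \<in> set_pmf P"
    then have "ennreal \<bar>F w\<bar> \<le> ennreal (c + b * sqrt (R w) + \<bar>Z w\<bar>)"
      using F_le by (intro ennreal_leI) fastforce
    also have "\<dots> = ennreal c + ennreal b * ennreal (sqrt (R w)) + ennreal \<bar>Z w\<bar>"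
      using c b R_nonneg[of w] by (simp add: ennreal_plus ennreal_mult)
    finally show "ennreal \<bar>F w\<bar> * indicator S w \<le> ennreal c * indicator S w
        + ennreal b * (ennreal (sqrt (R w)) * indicator S w) + ennreal \<bar>Z w\<bar> * indicator S w"
      by (cases "w \<in> S") auto
  qed
  also have "\<dots> = ennreal c * emeasure P S + ennreal b * (\<integral>\<^sup>+w\<in>S. ennreal (sqrt (R w)) \<partial>P)
      + (\<integral>\<^sup>+w\<in>S. ennreal \<bar>Z w\<bar> \<partial>P)"
    by (simp add: nn_integral_add nn_integral_cmult nn_integral_cmult_indicator)
  also have "\<dots> \<le> ennreal c * ennreal (measure P S) + ennreal b * ennreal (2 * sqrt (measure P S))
      + (\<integral>\<^sup>+w\<in>S. ennreal \<bar>Z w\<bar> \<partial>P)"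
    using set_nn_integral_sqrt_le[OF R_nonneg R_int, of S]
    by (intro add_mono mult_left_mono) (auto simp: measure_pmf.emeasure_eq_measure)
  also have "ennreal c * ennreal (measure P S) + ennreal b * ennreal (2 * sqrt (measure P S))
      = ennreal (c * measure P S + 2 * b * sqrt (measure P S))"
    using c b by (simp add: ennreal_plus ennreal_mult ac_simps)
  finally show ?thesis .
qed

lemma asymp_unif_integrable_dominated:
  assumes ui: "asymp_unif_integrable P Z"
    and F_le: "\<And>n w. w \<in> set_pmf (P n) \<Longrightarrow> \<bar>F n w\<bar> \<le> c + \<bar>Z n w\<bar> + b * sqrt (R n w)"
    and c: "0 \<le> c" and b: "0 \<le> b"
    and R_nonneg: "\<And>n w. 0 \<le> R n w" and R_int: "\<And>n. (\<integral>\<^sup>+w. ennreal (R n w) \<partial>P n) \<le> 1"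
  shows "asymp_unif_integrable P F"
proof -
  have le: "(\<integral>\<^sup>+w\<in>S. ennreal \<bar>F n w\<bar> \<partial>P n)
    \<le> ennreal (c * measure (P n) S + 2 * b * sqrt (measure (P n) S)) + (\<integral>\<^sup>+w\<in>S. ennreal \<bar>Z n w\<bar> \<partial>P n)"
    for n S
    by (rule set_nn_integral_dominated_le[where F="F n" and Z="Z n" and R="R n"])
      (use F_le c b R_nonneg R_int in auto)
  show ?thesis
    unfolding asymp_unif_integrable_def
  proof (intro conjI allI impI)
    obtain M where "M < \<infinity>" and M: "\<And>n. n \<ge> 1 \<Longrightarrow> (\<integral>\<^sup>+w. ennreal \<bar>Z n w\<bar> \<partial>P n) \<le> M"
      using asymp_unif_integrable_bounded[OF ui] by blast
    have "(\<integral>\<^sup>+w. ennreal \<bar>F n w\<bar> \<partial>P n) \<le> ennreal (c + 2 * b) + M" if "n \<ge> 1" for n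
      using le[of n UNIV] M[OF that] by (auto intro: order_trans add_left_mono)
    moreover have "ennreal (c + 2 * b) + M < \<infinity>"
      using \<open>M < \<infinity>\<close> by simp
    ultimately show "\<exists>M<\<infinity>. \<forall>n\<ge>1. (\<integral>\<^sup>+w. ennreal \<bar>F n w\<bar> \<partial>P n) \<le> M"
      by blast
  next
    fix E assume E: "(\<lambda>n. measure (P n) (E n)) \<longlonglongrightarrow> 0"
    have "(\<lambda>n. ennreal (c * measure (P n) (E n) + 2 * b * sqrt (measure (P n) (E n)))
        + (\<integral>\<^sup>+w\<in>E n. ennreal \<bar>Z n w\<bar> \<partial>P n)) \<longlonglongrightarrow> ennreal (c * 0 + 2 * b * sqrt 0) + 0"
      using E asymp_unif_integrable_tendsto_0[OF ui E]
      by (intro tendsto_add tendsto_ennrealI tendsto_mult tendsto_const tendsto_real_sqrt)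
    then have upper: "(\<lambda>n. ennreal (c * measure (P n) (E n) + 2 * b * sqrt (measure (P n) (E n)))
        + (\<integral>\<^sup>+w\<in>E n. ennreal \<bar>Z n w\<bar> \<partial>P n)) \<longlonglongrightarrow> 0"
      by simp
    show "(\<lambda>n. \<integral>\<^sup>+w\<in>E n. ennreal \<bar>F n w\<bar> \<partial>P n) \<longlonglongrightarrow> 0"
      by (rule tendsto_sandwich[OF _ _ tendsto_const upper]) (simp_all add: le)
  qed
qed

definition cond_self_info :: "nat \<Rightarrow> ('a \<times> 'b) pmf \<Rightarrow> 'a \<times> 'b \<Rightarrow> real" where
  "cond_self_info n P = (\<lambda>(x, y). 1 / real n * log 2 (1 / cond_prob P x y))"

lemma cond_info_density_eq_map_pmf: "cond_info_density n P = map_pmf (cond_self_info n P) P"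
  by (simp add: cond_info_density_def cond_self_info_def)

lemma pmf_le_pmf_map_snd: "pmf P (x, y) \<le> pmf (map_pmf snd P) y"
proof -
  have "pmf P (x, y) = measure P {(x, y)}"
    by (simp add: measure_pmf_single)
  also have "\<dots> \<le> measure P (snd -` {y})"
    by (intro measure_pmf.finite_measure_mono) auto
  also have "\<dots> = pmf (map_pmf snd P) y"
    by (simp add: pmf_map)
  finally show ?thesis .
qed

lemma cond_prob_pos_le_1:
  assumes "(x, y) \<in> set_pmf P"
  shows "0 < cond_prob P x y" and "cond_prob P x y \<le> 1"
  using pmf_positive[OF assms] pmf_le_pmf_map_snd[of P x y]
  by (auto simp: cond_prob_def)

lemma log_inverse_cond_prob_nonneg:
  "(x, y) \<in> set_pmf P \<Longrightarrow> 0 \<le> log 2 (1 / cond_prob P x y)"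
  using cond_prob_pos_le_1[of x y P] by simp

lemma cond_self_info_nonneg: "w \<in> set_pmf P \<Longrightarrow> 0 \<le> cond_self_info n P w"
  using log_inverse_cond_prob_nonneg[of "fst w" "snd w" P]
  by (auto simp: cond_self_info_def split: prod.split)

lemma ln_2_ge_half: "1 / 2 \<le> ln (2::real)"
  using ln_le_minus_one[of "1 / 2"] by (simp add: ln_div)

lemma log2_le_4_sqrt:
  fixes r :: real
  assumes "0 < r"
  shows "log 2 r \<le> 4 * sqrt r"
proof (cases "ln r \<le> 0")
  case True
  then have "ln r / ln 2 \<le> 0"
    by (simp add: divide_nonpos_pos)
  moreover have "0 \<le> sqrt r"
    using assms by simp
  ultimately show ?thesis
    unfolding log_def by linarith
next
  case False
  have "ln (sqrt r) \<le> sqrt r - 1"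
    using assms by (intro ln_le_minus_one) auto
  then have "ln r \<le> 2 * sqrt r"
    using assms by (simp add: ln_sqrt)
  moreover have "ln r / ln 2 \<le> ln r / (1 / 2)"
    using False ln_2_ge_half by (intro divide_left_mono) auto
  ultimately show ?thesis
    by (simp add: log_def)
qed

lemma log_inverse_cond_prob_mixture_le:
  fixes P P1 P2 :: "('a \<times> 'b) pmf"
  assumes mix: "\<And>z. pmf P z = a1 * pmf P1 z + a2 * pmf P2 z"
    and a1: "0 < a1" and a2: "0 \<le> a2" and xy: "(x, y) \<in> set_pmf P1"
  shows "log 2 (1 / cond_prob P x y)
    \<le> log 2 (1 / a1) + log 2 (1 / cond_prob P1 x y) + log 2 (pmf (map_pmf snd P) y / pmf (map_pmf snd P1) y)"
proof -
  define p p1 q q1 where "p = pmf P (x, y)" and "p1 = pmf P1 (x, y)"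
    and "q = pmf (map_pmf snd P) y" and "q1 = pmf (map_pmf snd P1) y"
  have "0 < p1"
    unfolding p1_def using xy by (rule pmf_positive)
  have "a1 * p1 \<le> p"
    unfolding p_def p1_def using mix[of "(x, y)"] a2 by simp
  then have "0 < p"
    using mult_pos_pos[OF a1 \<open>0 < p1\<close>] by linarith
  have "p \<le> q" "p1 \<le> q1"
    unfolding p_def p1_def q_def q1_def by (rule pmf_le_pmf_map_snd)+
  have "q / p \<le> q / (a1 * p1)"
    using \<open>a1 * p1 \<le> p\<close> \<open>p \<le> q\<close> \<open>0 < p\<close> \<open>0 < p1\<close> a1 by (intro divide_left_mono) auto
  also have "\<dots> = 1 / a1 * (q1 / p1) * (q / q1)"
    using a1 \<open>0 < p1\<close> \<open>p1 \<le> q1\<close> by (simp add: field_simps)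
  finally have "log 2 (q / p) \<le> log 2 (1 / a1 * (q1 / p1) * (q / q1))"
    using a1 \<open>0 < p\<close> \<open>0 < p1\<close> \<open>p \<le> q\<close> \<open>p1 \<le> q1\<close> by simp
  also have "\<dots> = log 2 (1 / a1 * (q1 / p1)) + log 2 (q / q1)"
    using a1 \<open>0 < p\<close> \<open>0 < p1\<close> \<open>p \<le> q\<close> \<open>p1 \<le> q1\<close> by (intro log_mult_pos) auto
  also have "log 2 (1 / a1 * (q1 / p1)) = log 2 (1 / a1) + log 2 (q1 / p1)"
    using a1 \<open>0 < p1\<close> \<open>p1 \<le> q1\<close> by (intro log_mult_pos) auto
  finally show ?thesis
    by (simp add: cond_prob_def p_def p1_def q_def q1_def)
qed

lemma cond_self_info_mixture_le:
  fixes P P1 P2 :: "('a \<times> 'b) pmf"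
  assumes mix: "\<And>z. pmf P z = a1 * pmf P1 z + a2 * pmf P2 z"
    and a1: "0 < a1" "a1 \<le> 1" and a2: "0 \<le> a2" and w: "w \<in> set_pmf P1"
  shows "\<bar>cond_self_info n P w\<bar>
    \<le> log 2 (1 / a1) + \<bar>cond_self_info n P1 w\<bar>
      + 4 * sqrt (pmf (map_pmf snd P) (snd w) / pmf (map_pmf snd P1) (snd w))"
proof -
  obtain x y where xy: "w = (x, y)" by fastforce
  define t where "t = 1 / real n"
  define R where "R = pmf (map_pmf snd P) y / pmf (map_pmf snd P1) y"
  have t: "0 \<le> t" "t \<le> 1"
    unfolding t_def by (auto simp: divide_le_eq)
  have "0 < a1 * pmf P1 w"
    using w a1 by (simp add: pmf_positive)
  moreover have "0 \<le> a2 * pmf P2 w"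
    using a2 by simp
  ultimately have "w \<in> set_pmf P"
    using mix[of w] by (simp add: set_pmf_iff)
  have "0 < pmf (map_pmf snd P) y"
    using pmf_positive[OF \<open>w \<in> set_pmf P\<close>] pmf_le_pmf_map_snd[of P x y] by (simp add: xy)
  moreover have "0 < pmf (map_pmf snd P1) y"
    using pmf_positive[OF w] pmf_le_pmf_map_snd[of P1 x y] by (simp add: xy)
  ultimately have "0 < R"
    unfolding R_def by simp
  \<comment> \<open>t = 1/n lies in [0, 1] (also for n = 0, where it is 0), so scaling by t only shrinks the
    nonnegative terms and the positive part of log R.\<close>
  have "\<bar>cond_self_info n P w\<bar> = t * log 2 (1 / cond_prob P x y)"
    using log_inverse_cond_prob_nonneg[OF \<open>w \<in> set_pmf P\<close>[unfolded xy]]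
    by (simp add: cond_self_info_def xy t_def abs_mult)
  also have "\<dots> \<le> t * log 2 (1 / a1) + t * log 2 (1 / cond_prob P1 x y) + t * log 2 R"
    using log_inverse_cond_prob_mixture_le[OF mix a1(1) a2 w[unfolded xy]] t
    unfolding R_def by (metis distrib_left mult_left_mono)
  also have "t * log 2 (1 / a1) \<le> log 2 (1 / a1)"
    using t a1 by (intro mult_left_le_one_le) auto
  also have "t * log 2 (1 / cond_prob P1 x y) = \<bar>cond_self_info n P1 w\<bar>"
    using log_inverse_cond_prob_nonneg[OF w[unfolded xy]]
    by (simp add: cond_self_info_def xy t_def abs_mult)
  also have "t * log 2 R \<le> 4 * sqrt R"
  proof (cases "0 \<le> log 2 R")
    case True
    then have "t * log 2 R \<le> log 2 R"
      using t by (intro mult_left_le_one_le) auto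
    then show ?thesis
      using log2_le_4_sqrt[OF \<open>0 < R\<close>] by linarith
  next
    case False
    then have "t * log 2 R \<le> 0"
      using t by (simp add: mult_nonneg_nonpos)
    then show ?thesis
      using \<open>0 < R\<close> real_sqrt_ge_zero[of R] by linarith
  qed
  finally show ?thesis
    by (simp add: R_def xy)
qed

lemma nn_integral_pmf_ratio_le_1:
  fixes Q Q' :: "'b pmf"
  shows "(\<integral>\<^sup>+y. ennreal (pmf Q y / pmf Q' y) \<partial>Q') \<le> 1"
proof -
  have "(\<integral>\<^sup>+y. ennreal (pmf Q y / pmf Q' y) \<partial>Q')
      = (\<integral>\<^sup>+y. ennreal (pmf Q' y) * ennreal (pmf Q y / pmf Q' y) \<partial>count_space UNIV)"
    by (rule nn_integral_measure_pmf)
  also have "\<dots> \<le> (\<integral>\<^sup>+y. ennreal (pmf Q y) \<partial>count_space UNIV)"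
    by (intro nn_integral_mono) (auto simp: ennreal_mult[symmetric])
  also have "\<dots> = 1"
    by (simp add: nn_integral_pmf)
  finally show ?thesis .
qed

lemma asymp_unif_integrable_cond_self_info_mixture:
  assumes mix: "\<And>n z. pmf (P n) z = a1 * pmf (P1 n) z + a2 * pmf (P2 n) z"
    and a1: "0 < a1" "a1 \<le> 1" and a2: "0 \<le> a2"
    and W: "condition_W (\<lambda>n. cond_info_density n (P1 n))"
  shows "asymp_unif_integrable P1 (\<lambda>n. cond_self_info n (P n))"
proof (rule asymp_unif_integrable_dominated)
  show "asymp_unif_integrable P1 (\<lambda>n. cond_self_info n (P1 n))"
    using W cond_self_info_nonneg
    by (intro asymp_unif_integrable_if_condition_W) (auto simp: cond_info_density_eq_map_pmf)
  show "\<bar>cond_self_info n (P n) w\<bar> \<le> log 2 (1 / a1) + \<bar>cond_self_info n (P1 n) w\<bar>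
      + 4 * sqrt (pmf (map_pmf snd (P n)) (snd w) / pmf (map_pmf snd (P1 n)) (snd w))"
    if "w \<in> set_pmf (P1 n)" for n w
    using mix a1 a2 that by (rule cond_self_info_mixture_le)
  show "(\<integral>\<^sup>+w. ennreal (pmf (map_pmf snd (P n)) (snd w) / pmf (map_pmf snd (P1 n)) (snd w)) \<partial>P1 n) \<le> 1"
    for n
    using nn_integral_pmf_ratio_le_1[where Q="map_pmf snd (P n)" and Q'="map_pmf snd (P1 n)"] by simp
qed (use a1 in auto)

theorem lemma1:
  fixes P1 P2 P :: "nat \<Rightarrow> ('x::countable list \<times> 'y::countable list) pmf"
    and \<alpha>1 \<alpha>2 :: real
  assumes "correlated_source P1" and "correlated_source P2"
    and "\<alpha>1 > 0" and "\<alpha>2 > 0" and "\<alpha>1 + \<alpha>2 = 1"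
    and "\<And>n z. pmf (P n) z = \<alpha>1 * pmf (P1 n) z + \<alpha>2 * pmf (P2 n) z"
    and "condition_W (\<lambda>n. cond_info_density n (P1 n))"
    and "condition_W (\<lambda>n. cond_info_density n (P2 n))"
  shows "condition_W (\<lambda>n. cond_info_density n (P n))"
proof -
  have mix': "\<And>n z. pmf (P n) z = \<alpha>2 * pmf (P2 n) z + \<alpha>1 * pmf (P1 n) z"
    using assms(6) by simp
  have "asymp_unif_integrable P1 (\<lambda>n. cond_self_info n (P n))"
    using assms(3-5) by (intro asymp_unif_integrable_cond_self_info_mixture[OF assms(6) _ _ _ assms(7)]) auto
  moreover have "asymp_unif_integrable P2 (\<lambda>n. cond_self_info n (P n))"
    using assms(3-5) by (intro asymp_unif_integrable_cond_self_info_mixture[OF mix' _ _ _ assms(8)]) auto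
  ultimately have "asymp_unif_integrable P (\<lambda>n. cond_self_info n (P n))"
    using assms(3,4) by (intro asymp_unif_integrable_mixture[OF assms(6)])
  then show ?thesis
    unfolding cond_info_density_eq_map_pmf by (rule condition_W_map_pmfI)
qed

end
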